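(* Let $F\in\mathbb{R}^{n\times n}$ and $L\in\mathbb{R}^{n\times m}$, and let $\Sigma\in\mathbb{R}^{m\times m}$ be symmetric positive definite with symmetric square root $\Sigma^{1/2}$. Let $\alpha>0$, $\mathcal{A}\in(0,1]$, $a_p\in(0,\mathcal{A})$ and $\bar v_p>0$. Set $$\underline{\epsilon}_p=\frac{m}{\mathcal{A}-a_p}-\alpha,\qquad \bar\omega=\alpha+\underline{\epsilon}_p+\bar v_p .$$ Fix $b\in(0,1)$ and let $\mathcal{P}$ be a solution of $$\min_{\mathcal{P}}\ -\log\det\mathcal{P}\quad\text{s.t.}\quad \mathcal{P}\succ0\ \text{ and }\ \mathrm{(LMI)} .$$ Then: (i) every trajectory of $e_{k+1}=Fe_k-L\Sigma^{1/2}\zeta_k+v_k$ with $e_1=0$, $\|\zeta_k\|^2\le\alpha+\underline{\epsilon}_p$ and $\|v_k\|^2\le\bar v_p$ for all $k$ satisfies $e_k^T\mathcal{P}e_k\le1$; that is, the corresponding reachable set $\tilde{\mathcal{R}}$ lies in $\{e:e^T\mathcal{P}e\le1\}$; (ii) this ellipsoid has minimal volume among ellipsoids $\{e:e^T\mathcal{P}'e\le1\}$ with $\mathcal{P}'\succ0$ satisfying (LMI) for this $b$.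
   Context: (LMI) denotes the matrix inequality $$\begin{bmatrix} b\mathcal{P} & F^T \mathcal{P} & 0 & 0 & 0 & 0\\ \mathcal{P} F & \mathcal{P} & \mathcal{P} & -\mathcal{P} L \Sigma^{1/2} & 0 & 0\\ 0 & \mathcal{P} & \tfrac{1-b}{\bar{\omega}}I & 0 & 0 & 0\\ 0 & -\Sigma^{1/2}L^T \mathcal{P} & 0 & \tfrac{1-b}{\bar{\omega}}I & 0 & 0\\ 0 & 0 & 0 & 0 & I & 0\\ 0 & 0 & 0 & 0 & 0 & I \end{bmatrix}\succeq 0 .$$ Interpretation in the paper: $\zeta_k=\Sigma^{-1/2}(Ce_k+\eta_k+\delta_k)$ is the normalized residual under a sensor attack $\delta_k$, and $\alpha$ is the chi-squared detector threshold with false alarm rate $\mathcal{A}$. The attacker is assumed to keep $E[\zeta_k]=0$ and $E[\zeta_k\zeta_k^T]=I_m$. The value $\underline{\epsilon}_p$ then comes from a Markov-inequality bound guaranteeing $\Pr[\|\zeta_k\|^2\le\alpha+\underline{\epsilon}_p]\ge p:=1-\mathcal{A}+a_p$. The constant $\bar v_p$ is chosen so that $\Pr[\|v_k\|^2\le\bar v_p]=p$. *)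

theory Defs
  imports "HOL-Analysis.Analysis"
begin

definition posdef :: "real^'n^'n \<Rightarrow> bool" where
  "posdef P \<longleftrightarrow> transpose P = P \<and> (\<forall>x. x \<noteq> 0 \<longrightarrow> x \<bullet> (P *v x) > 0)"

text \<open>The LMI of the paper: the 6x6 block matrix
  [[b P, F^T P, 0, 0, 0, 0],
   [P F, P, P, -P L S, 0, 0],
   [0, P, c I, 0, 0, 0],
   [0, -S L^T P, 0, c I, 0, 0],
   [0, 0, 0, 0, I, 0],
   [0, 0, 0, 0, 0, I]]   with c = (1-b)/omega and S the square root of Sigma
  is positive semidefinite, written literally as nonnegativity of its quadratic
  form, expanded block by block (blocks of sizes n, n, n, m, n, n).\<close>
definition lmi :: "real \<Rightarrow> real \<Rightarrow> real^'n^'n \<Rightarrow> real^'m^'n \<Rightarrow> real^'m^'m \<Rightarrow> real^'n^'n \<Rightarrow> bool" where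
  "lmi b \<omega> F L S P \<longleftrightarrow>
    (\<forall>(x1::real^'n) (x2::real^'n) (x3::real^'n) (x4::real^'m) (x5::real^'n) (x6::real^'n).
       0 \<le> x1 \<bullet> ((b *\<^sub>R P) *v x1) + x1 \<bullet> ((transpose F ** P) *v x2)
          + x2 \<bullet> ((P ** F) *v x1) + x2 \<bullet> (P *v x2) + x2 \<bullet> (P *v x3)
          + x2 \<bullet> ((- (P ** L ** S)) *v x4)
          + x3 \<bullet> (P *v x2) + x3 \<bullet> ((((1 - b) / \<omega>) *\<^sub>R mat 1) *v x3)
          + x4 \<bullet> ((- (S ** transpose L ** P)) *v x2)
          + x4 \<bullet> ((((1 - b) / \<omega>) *\<^sub>R mat 1) *v x4)
          + x5 \<bullet> (mat 1 *v x5) + x6 \<bullet> (mat 1 *v x6))"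

end

theory Submission
  imports Defs
begin

text \<open>
  Evaluating the quadratic form of the LMI at (e, -e', v, \<zeta>, 0, 0), where
  e' = F e - L \<Sigma>^(1/2) \<zeta> + v is the successor of e, gives the one-step bound
  e'^T P e' \<le> b e^T P e + (1 - b)/\<omega> (|v|^2 + |\<zeta>|^2).
  Since |v|^2 + |\<zeta>|^2 \<le> \<omega>, the ellipsoid e^T P e \<le> 1 is invariant, and it contains e 1 = 0.
  For the volume: writing M^T P M = I, the ellipsoid is the image of the unit ball
  under M, so its volume is vol(ball) / sqrt(det P); maximising log det P therefore
  minimises the volume.
\<close>

section \<open>Volume of linear images\<close>

text \<open>
  The library computes the volume of linear images only for index types of class wellorder.
  The type 'a rank, a copy of {..<CARD('a)}, is such an index type in bijection with 'a;
  reindexing coordinates along the bijection preserves Lebesgue measure and determinants.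
\<close>

typedef (overloaded) 'a rank = "{..<CARD('a::finite)}"
  by (rule exI[of _ 0]) simp

instantiation rank :: (finite) linorder
begin
definition less_eq_rank :: "'a rank \<Rightarrow> 'a rank \<Rightarrow> bool" where "i \<le> j \<longleftrightarrow> Rep_rank i \<le> Rep_rank j"
definition less_rank :: "'a rank \<Rightarrow> 'a rank \<Rightarrow> bool" where "i < j \<longleftrightarrow> Rep_rank i < Rep_rank j"
instance by standard (auto simp: less_eq_rank_def less_rank_def Rep_rank_inject)
end

instance rank :: (finite) finite
  by standard (simp add: type_definition.univ[OF type_definition_rank])

instance rank :: (finite) wellorder
proof -
  have "wf {(x :: 'a rank, y). x < y}"
    by (rule wf_subset[OF wf_inv_image[OF wf_less_than, of Rep_rank]]) (auto simp: less_rank_def)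
  then show "OFCLASS('a rank, wellorder_class)"
    by (rule wf_wellorderI) intro_classes
qed

lemma card_rank: "CARD('a::finite rank) = CARD('a)"
  using type_definition.card[OF type_definition_rank] by simp

definition vec_reindex :: "('k \<Rightarrow> 'n) \<Rightarrow> 'a^'n \<Rightarrow> 'a^'k" where
  "vec_reindex h x = (\<chi> j. x $ h j)"

lemma vec_reindex_nth [simp]: "vec_reindex h x $ j = x $ h j"
  by (simp add: vec_reindex_def)

lemma linear_vec_reindex: "linear (vec_reindex h :: real^'n \<Rightarrow> real^'k)"
  by (rule linearI) (simp_all add: vec_eq_iff)

lemma borel_measurable_vec_reindex:
  "(vec_reindex h :: real^'n \<Rightarrow> real^'k) \<in> borel_measurable borel"
  using linear_vec_reindex linear_conv_bounded_linear
  by (blast intro: borel_measurable_continuous_onI linear_continuous_on)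

lemma prod_Basis_vec: "(\<Prod>b\<in>Basis. (x::real^'n) \<bullet> b) = (\<Prod>i\<in>UNIV. x $ i)"
  by (simp add: Basis_vec_def cart_eq_inner_axis axis_eq_axis prod.UNION_disjoint)

lemma emeasure_lborel_box_cart:
  fixes l u :: "real^'n"
  assumes "\<And>i. l $ i \<le> u $ i"
  shows "emeasure lborel (box l u) = (\<Prod>i\<in>UNIV. u $ i - l $ i)"
proof -
  have "\<forall>b\<in>Basis. l \<bullet> b \<le> u \<bullet> b"
    using assms by (auto simp: Basis_vec_def cart_eq_inner_axis[symmetric])
  then show ?thesis
    by (simp add: emeasure_lborel_box_eq prod_Basis_vec)
qed

lemma distr_lborel_vec_reindex:
  fixes h :: "'k::finite \<Rightarrow> 'n::finite"
  assumes "bij h"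
  shows "distr lborel borel (vec_reindex h :: real^'n \<Rightarrow> real^'k) = lborel"
proof (rule lborel_eqI[symmetric])
  note borel_measurable_vec_reindex [measurable]
  fix l u :: "real^'k"
  assume le: "\<And>b. b \<in> Basis \<Longrightarrow> l \<bullet> b \<le> u \<bullet> b"
  then have "l $ i \<le> u $ i" for i
    using le[of "axis i 1"] by (simp add: cart_eq_inner_axis)
  have preimage: "vec_reindex h -` box l u = box (vec_reindex (inv h) l) (vec_reindex (inv h) u)"
    using assms by (auto simp: mem_box_cart bij_def surj_f_inv_f) (metis bij_inv_eq_iff assms)+
  have "(\<Prod>i\<in>UNIV. u $ inv h i - l $ inv h i) = (\<Prod>i\<in>UNIV. u $ i - l $ i)"
    using prod.reindex_bij_betw[OF bij_imp_bij_inv[OF assms], of "\<lambda>i. u $ i - l $ i"] by simp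
  then show "emeasure (distr lborel borel (vec_reindex h)) (box l u) = (\<Prod>b\<in>Basis. (u - l) \<bullet> b)"
    using \<open>\<And>i. l $ i \<le> u $ i\<close>
    by (simp add: emeasure_distr preimage emeasure_lborel_box_cart prod_Basis_vec)
qed simp

lemma det_reindex:
  fixes A :: "'a::comm_ring_1^'n^'n" and h :: "'k::finite \<Rightarrow> 'n"
  assumes "bij h"
  shows "det (\<chi> i j. A $ h i $ h j) = det A"
proof -
  let ?conj = "map_permutation UNIV h"
  have inj: "inj h" and bij_inv: "bij (inv h)"
    using assms bij_imp_bij_inv bij_is_inj by blast+
  have conj_permutes: "?conj q permutes UNIV" if "q permutes UNIV" for q
    using map_permutation_permutes[OF assms that] .
  have conj_apply: "?conj q (h j) = h (q j)" for q j
    using map_permutation_apply[of h UNIV] inj by simp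
  have "bij_betw ?conj {q. q permutes (UNIV :: 'k set)} {p. p permutes (UNIV :: 'n set)}"
  proof (rule bij_betw_byWitness[where f' = "map_permutation UNIV (inv h)"])
    show "\<forall>q\<in>{q. q permutes UNIV}. map_permutation UNIV (inv h) (?conj q) = q"
      using map_permutation_compose_inv[OF assms] inj by (auto simp: inv_f_f)
    show "\<forall>p\<in>{p. p permutes UNIV}. ?conj (map_permutation UNIV (inv h) p) = p"
      using map_permutation_compose_inv[OF bij_inv] assms by (auto simp: surj_f_inv_f bij_is_surj)
    show "?conj ` {q. q permutes UNIV} \<subseteq> {p. p permutes UNIV}"
      using conj_permutes by blast
    show "map_permutation UNIV (inv h) ` {p. p permutes UNIV} \<subseteq> {q. q permutes UNIV}"
      using map_permutation_permutes[OF bij_inv] by blast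
  qed
  then have "det A = (\<Sum>q | q permutes (UNIV :: 'k set).
                   of_int (sign (?conj q)) * (\<Prod>i\<in>UNIV. A $ i $ ?conj q i))"
    unfolding det_def by (rule sum.reindex_bij_betw[symmetric])
  also have "\<dots> = (\<Sum>q | q permutes (UNIV :: 'k set).
                   of_int (sign q) * (\<Prod>j\<in>UNIV. A $ h j $ h (q j)))"
  proof (rule sum.cong)
    fix q :: "'k \<Rightarrow> 'k" assume "q \<in> {q. q permutes UNIV}"
    then have "sign (?conj q) = sign q"
      using sign_map_permutation[of h UNIV q] inj by simp
    moreover have "(\<Prod>i\<in>UNIV. A $ i $ ?conj q i) = (\<Prod>j\<in>UNIV. A $ h j $ h (q j))"
      using prod.reindex_bij_betw[OF assms, of "\<lambda>i. A $ i $ ?conj q i"] conj_apply by simp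
    ultimately show "of_int (sign (?conj q)) * (\<Prod>i\<in>UNIV. A $ i $ ?conj q i)
                      = of_int (sign q) * (\<Prod>j\<in>UNIV. A $ h j $ h (q j))" by simp
  qed simp
  finally show ?thesis by (simp add: det_def)
qed

lemma vec_reindex_matrix_vector_mult:
  fixes M :: "'a::comm_semiring_1^'n^'n"
  assumes "bij h"
  shows "vec_reindex h (M *v x) = (\<chi> i j. M $ h i $ h j) *v vec_reindex h x"
  using assms
  by (simp add: vec_eq_iff matrix_vector_mult_def sum.reindex_bij_betw[of h UNIV UNIV, symmetric] bij_betw_def)

lemma compact_linear_image:
  fixes f :: "'a::euclidean_space \<Rightarrow> 'b::real_normed_vector"
  assumes "linear f" and "compact K"
  shows "compact (f ` K)"
  using assms by (intro compact_continuous_image linear_continuous_on) (simp add: linear_conv_bounded_linear)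

lemma emeasure_lborel_compact:
  fixes K :: "'a::euclidean_space set"
  assumes "compact K"
  shows "emeasure lborel K = ennreal (measure lebesgue K)"
proof -
  have "emeasure lborel K = emeasure lebesgue K"
    using assms by (simp add: borel_compact emeasure_completion)
  then show ?thesis
    using lmeasurable_compact[OF assms] by (simp add: emeasure_eq_measure2)
qed

lemma emeasure_lborel_vec_reindex:
  fixes h :: "'k::finite \<Rightarrow> 'n::finite" and K :: "(real^'n) set"
  assumes "bij h" and "compact K"
  shows "emeasure lborel (vec_reindex h ` K) = emeasure lborel K"
proof -
  have "inj (vec_reindex h :: real^'n \<Rightarrow> real^'k)"
    using assms(1) by (auto simp: inj_def vec_eq_iff bij_def surj_def) (metis)
  then have "vec_reindex h -` vec_reindex h ` K = K" by (simp add: inj_vimage_image_eq)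
  moreover have "compact (vec_reindex h ` K :: (real^'k) set)"
    by (rule compact_linear_image[OF linear_vec_reindex assms(2)])
  ultimately show ?thesis
    by (subst distr_lborel_vec_reindex[OF assms(1), symmetric])
      (simp add: emeasure_distr borel_compact borel_measurable_vec_reindex)
qed

lemma emeasure_lborel_matrix_image:
  fixes M :: "real^'n^'n" and K :: "(real^'n) set"
  assumes "compact K"
  shows "emeasure lborel ((\<lambda>x. M *v x) ` K) = ennreal \<bar>det M\<bar> * emeasure lborel K"
proof -
  obtain h :: "'n rank \<Rightarrow> 'n" where h: "bij h"
    using finite_same_card_bij[of "UNIV :: 'n rank set" "UNIV :: 'n set"] card_rank by auto
  define N :: "real^'n rank^'n rank" where "N = (\<chi> i j. M $ h i $ h j)"
  let ?T = "vec_reindex h ` K"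
  have lin: "linear (\<lambda>x. M *v x)" "linear (\<lambda>y. N *v y)" by (simp_all add: matrix_vector_mul_linear)
  have "compact ((\<lambda>x. M *v x) ` K)" "compact ?T"
    using assms lin by (simp_all add: compact_linear_image linear_vec_reindex)
  have image_eq: "vec_reindex h ` (\<lambda>x. M *v x) ` K = (\<lambda>y. N *v y) ` ?T"
    by (auto simp: image_image N_def vec_reindex_matrix_vector_mult[OF h])
  have "compact ((\<lambda>y. N *v y) ` ?T)"
    using \<open>compact ?T\<close> lin(2) by (rule compact_linear_image[rotated])
  have "emeasure lborel ((\<lambda>x. M *v x) ` K) = emeasure lborel ((\<lambda>y. N *v y) ` ?T)"
    using emeasure_lborel_vec_reindex[OF h \<open>compact ((\<lambda>x. M *v x) ` K)\<close>] image_eq by simp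
  also have "\<dots> = ennreal (\<bar>det N\<bar> * measure lebesgue ?T)"
    using measure_linear_image[OF lin(2) lmeasurable_compact[OF \<open>compact ?T\<close>]]
      emeasure_lborel_compact[OF \<open>compact ((\<lambda>y. N *v y) ` ?T)\<close>]
    by (simp add: matrix_of_matrix_vector_mul)
  also have "\<dots> = ennreal \<bar>det M\<bar> * emeasure lborel ?T"
    using emeasure_lborel_compact[OF \<open>compact ?T\<close>] det_reindex[OF h, of M]
    by (simp add: N_def ennreal_mult)
  also have "\<dots> = ennreal \<bar>det M\<bar> * emeasure lborel K"
    using emeasure_lborel_vec_reindex[OF h assms] by simp
  finally show ?thesis .
qed

section \<open>Volume of an ellipsoid\<close>

lemma inner_matrix_symmetric:
  fixes P :: "real^'n^'n"
  assumes "transpose P = P"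
  shows "x \<bullet> (P *v y) = y \<bullet> (P *v x)"
  by (metis assms dot_lmul_matrix inner_commute transpose_matrix_vector)

lemma inner_transpose_matrix_vector:
  fixes A :: "real^'a^'b"
  shows "x \<bullet> (transpose A *v y) = (A *v x) \<bullet> y"
  by (metis dot_lmul_matrix vector_transpose_matrix)

lemma quadratic_form_congruence:
  fixes M P :: "real^'n^'n"
  shows "(M *v x) \<bullet> (P *v (M *v x)) = x \<bullet> ((transpose M ** P ** M) *v x)"
  by (metis inner_transpose_matrix_vector matrix_vector_mul_assoc)

lemma posdef_orthonormal_family:
  fixes P :: "real^'n^'n"
  assumes "posdef P" and "k \<le> CARD('n)"
  shows "\<exists>u::nat \<Rightarrow> real^'n. \<forall>i<k. \<forall>j<k. u i \<bullet> (P *v u j) = (if i = j then 1 else 0)"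
  using assms(2)
proof (induction k)
  case 0
  then show ?case by auto
next
  case (Suc k)
  then obtain u :: "nat \<Rightarrow> real^'n"
    where u: "\<forall>i<k. \<forall>j<k. u i \<bullet> (P *v u j) = (if i = j then 1 else 0)"
    by auto
  let ?S = "(\<lambda>i. P *v u i) ` {..<k}"
  have "dim ?S \<le> card ?S" by (rule dim_le_card) (auto intro: span_base)
  also have "card ?S \<le> k" using card_image_le[of "{..<k}"] by simp
  finally have "dim ?S < DIM(real^'n)" using Suc.prems by simp
  then obtain x :: "real^'n" where "x \<noteq> 0" and x_orth: "\<And>y. y \<in> span ?S \<Longrightarrow> orthogonal x y"
    using orthogonal_to_subspace_exists by blast
  define q where "q = x \<bullet> (P *v x)"
  have "q > 0" using assms(1) \<open>x \<noteq> 0\<close> unfolding posdef_def q_def by auto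
  define w where "w = (1 / sqrt q) *\<^sub>R x"
  have "w \<bullet> (P *v w) = 1"
    using \<open>q > 0\<close> by (simp add: w_def q_def[symmetric] matrix_vector_mult_scaleR power2_eq_square[symmetric])
  moreover have wu: "w \<bullet> (P *v u i) = 0" if "i < k" for i
    using x_orth[of "P *v u i"] that by (auto simp: w_def orthogonal_def intro: span_base)
  moreover have "u i \<bullet> (P *v w) = 0" if "i < k" for i
    using wu[OF that] inner_matrix_symmetric assms(1) unfolding posdef_def by metis
  ultimately show ?case
    by (intro exI[of _ "u(k := w)"]) (auto simp: less_Suc_eq u)
qed

lemma posdef_congruent_mat_1:
  fixes P :: "real^'n^'n"
  assumes "posdef P"
  obtains M :: "real^'n^'n" where "transpose M ** P ** M = mat 1"
proof -
  obtain u :: "nat \<Rightarrow> real^'n"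
    where u: "\<forall>i<CARD('n). \<forall>j<CARD('n). u i \<bullet> (P *v u j) = (if i = j then 1 else 0)"
    using posdef_orthonormal_family[OF assms order_refl] by auto
  obtain g :: "'n \<Rightarrow> nat" where g: "bij_betw g UNIV {0..<CARD('n)}"
    using ex_bij_betw_finite_nat[of "UNIV::'n set"] by auto
  have g_inj: "g i = g j \<longleftrightarrow> i = j" for i j using g by (auto simp: bij_betw_def inj_on_def)
  have g_range: "g i < CARD('n)" for i using g by (auto simp: bij_betw_def)
  define M :: "real^'n^'n" where "M = (\<chi> r c. u (g c) $ r)"
  have "(transpose M ** P ** M) $ i $ j = u (g i) \<bullet> (P *v u (g j))" for i j
    by (simp add: M_def matrix_matrix_mult_def transpose_def inner_vec_def matrix_vector_mult_def
        sum_distrib_left sum_distrib_right mult.assoc mult.left_commute) (rule sum.swap)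
  then have "transpose M ** P ** M = mat 1"
    using u g_range g_inj by (simp add: vec_eq_iff mat_def)
  then show thesis by (rule that)
qed

lemma det_congruent_mat_1:
  fixes M P :: "real^'n^'n"
  assumes "transpose M ** P ** M = mat 1"
  shows "(det M)\<^sup>2 * det P = 1"
proof -
  have "det (transpose M ** P ** M) = 1" using assms by simp
  then show ?thesis by (simp add: det_mul power2_eq_square mult_ac)
qed

lemma posdef_det_pos:
  fixes P :: "real^'n^'n"
  assumes "posdef P"
  shows "det P > 0"
proof -
  obtain M :: "real^'n^'n" where "transpose M ** P ** M = mat 1"
    using posdef_congruent_mat_1[OF assms] by blast
  then have det_M: "(det M)\<^sup>2 * det P = 1"
    by (rule det_congruent_mat_1)
  show ?thesis
  proof (rule ccontr)
    assume "\<not> det P > 0"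
    then have "(det M)\<^sup>2 * det P \<le> 0" by (simp add: mult_nonneg_nonpos)
    with det_M show False by simp
  qed
qed

lemma ellipsoid_eq_linear_image_cball:
  fixes P M :: "real^'n^'n"
  assumes M: "transpose M ** P ** M = mat 1" and "invertible M"
  shows "{e. e \<bullet> (P *v e) \<le> 1} = (\<lambda>x. M *v x) ` cball 0 1"
proof -
  obtain N :: "real^'n^'n" where N: "M ** N = mat 1"
    using \<open>invertible M\<close> unfolding invertible_def by blast
  have quad: "(M *v x) \<bullet> (P *v (M *v x)) = (norm x)\<^sup>2" for x
    by (simp add: quadratic_form_congruence M power2_norm_eq_inner)
  have "e \<in> (\<lambda>x. M *v x) ` cball 0 1" if "e \<bullet> (P *v e) \<le> 1" for e
  proof
    show "e = M *v (N *v e)" using N by (simp add: matrix_vector_mul_assoc)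
    then show "N *v e \<in> cball 0 1"
      using that quad[of "N *v e"] by (simp add: power_le_one_iff)
  qed
  moreover have "M *v x \<in> {e. e \<bullet> (P *v e) \<le> 1}" if "norm x \<le> 1" for x
    using that quad[of x] by (simp add: power_le_one)
  ultimately show ?thesis by auto
qed

lemma emeasure_ellipsoid:
  fixes P :: "real^'n^'n"
  assumes "posdef P"
  shows "emeasure lborel {e. e \<bullet> (P *v e) \<le> 1}
           = ennreal (1 / sqrt (det P)) * emeasure lborel (cball (0::real^'n) 1)"
proof -
  obtain M :: "real^'n^'n" where M: "transpose M ** P ** M = mat 1"
    using posdef_congruent_mat_1[OF assms] by blast
  have det_M: "(det M)\<^sup>2 * det P = 1"
    using det_congruent_mat_1[OF M] .
  then have "sqrt ((det M)\<^sup>2 * det P) = 1" by simp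
  then have abs_det_M: "\<bar>det M\<bar> = 1 / sqrt (det P)"
    using posdef_det_pos[OF assms] by (simp add: real_sqrt_mult field_simps)
  have "invertible M"
    using det_M by (auto simp: invertible_det_nz)
  then show ?thesis
    using ellipsoid_eq_linear_image_cball[OF M] emeasure_lborel_matrix_image[of "cball 0 1" M]
    by (simp add: abs_det_M)
qed

lemma emeasure_ellipsoid_le_if_det_ge:
  fixes P P' :: "real^'n^'n"
  assumes "posdef P" and "posdef P'" and "det P' \<le> det P"
  shows "emeasure lborel {e. e \<bullet> (P *v e) \<le> 1} \<le> emeasure lborel {e. e \<bullet> (P' *v e) \<le> 1}"
proof -
  have "1 / sqrt (det P) \<le> 1 / sqrt (det P')"
    using assms posdef_det_pos[OF \<open>posdef P'\<close>] by (intro divide_left_mono) auto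
  then show ?thesis
    unfolding emeasure_ellipsoid[OF \<open>posdef P\<close>] emeasure_ellipsoid[OF \<open>posdef P'\<close>]
    by (intro mult_right_mono ennreal_leI) auto
qed

section \<open>Invariance of the ellipsoid under the LMI\<close>

lemma uminus_matrix_vector_mult: "(- (A::real^'a^'b)) *v x = - (A *v x)"
  by (simp add: vec_eq_iff matrix_vector_mult_def sum_negf)

lemma inner_transpose_matrix_mult:
  fixes A :: "real^'a^'b" and P :: "real^'c^'b"
  shows "x \<bullet> ((transpose A ** P) *v y) = (A *v x) \<bullet> (P *v y)"
  by (simp only: matrix_vector_mul_assoc[symmetric] inner_transpose_matrix_vector)

lemma lmi_step_bound:
  fixes F :: "real^'n^'n" and L :: "real^'m^'n" and S :: "real^'m^'m" and P :: "real^'n^'n"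
  assumes P_sym: "transpose P = P" and S_sym: "transpose S = S" and "lmi b \<omega> F L S P"
  shows "(F *v e - (L ** S) *v z + v) \<bullet> (P *v (F *v e - (L ** S) *v z + v))
           \<le> b * (e \<bullet> (P *v e)) + ((1 - b) / \<omega>) * (v \<bullet> v + z \<bullet> z)"
proof -
  define w where "w = F *v e - (L ** S) *v z + v"
  define c where "c = (1 - b) / \<omega>"
  define B where "B x y = x \<bullet> (P *v y)" for x y
  have B_sym: "B x y = B y x" for x y
    unfolding B_def by (rule inner_matrix_symmetric[OF P_sym])
  have B_ww: "B w w = B w (F *v e) - B w ((L ** S) *v z) + B w v"
    by (simp add: B_def w_def matrix_vector_right_distrib matrix_vector_mult_diff_distrib
        inner_diff_right inner_add_right)
  have LS_transpose: "S ** transpose L ** P = transpose (L ** S) ** P"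
    by (simp add: matrix_transpose_mul S_sym)
  have "e \<bullet> ((transpose F ** P) *v (- w)) = - B w (F *v e)"
    using inner_transpose_matrix_mult[of e F P "- w"] B_sym[of "F *v e" w] by (simp add: B_def vec.neg)
  moreover have "z \<bullet> ((- (S ** transpose L ** P)) *v (- w)) = B w ((L ** S) *v z)"
    using inner_transpose_matrix_mult[of z "L ** S" P w] B_sym[of "(L ** S) *v z" w] LS_transpose
    by (simp add: B_def uminus_matrix_vector_mult vec.neg)
  moreover have "v \<bullet> (P *v (- w)) = - B w v"
    using B_sym[of v w] by (simp add: B_def vec.neg)
  moreover have "0 \<le> e \<bullet> ((b *\<^sub>R P) *v e) + e \<bullet> ((transpose F ** P) *v (- w))
          + (- w) \<bullet> ((P ** F) *v e) + (- w) \<bullet> (P *v (- w)) + (- w) \<bullet> (P *v v)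
          + (- w) \<bullet> ((- (P ** L ** S)) *v z)
          + v \<bullet> (P *v (- w)) + v \<bullet> ((c *\<^sub>R mat 1) *v v)
          + z \<bullet> ((- (S ** transpose L ** P)) *v (- w))
          + z \<bullet> ((c *\<^sub>R mat 1) *v z)
          + (0::real^'n) \<bullet> (mat 1 *v 0) + (0::real^'n) \<bullet> (mat 1 *v 0)"
    using \<open>lmi b \<omega> F L S P\<close> unfolding lmi_def c_def by blast
  ultimately have "0 \<le> b * B e e - B w w + c * (v \<bullet> v) + c * (z \<bullet> z)"
    using B_ww
    by (simp add: B_def matrix_vector_mul_assoc matrix_mul_assoc vec.neg uminus_matrix_vector_mult
        scaleR_matrix_vector_assoc[symmetric])
  then show ?thesis
    unfolding B_def c_def w_def[symmetric] by (simp add: algebra_simps)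
qed

lemma lmi_ellipsoid_invariant:
  fixes F :: "real^'n^'n" and L :: "real^'m^'n" and S :: "real^'m^'m" and P :: "real^'n^'n"
    and e :: "nat \<Rightarrow> real^'n" and \<zeta> :: "nat \<Rightarrow> real^'m" and v :: "nat \<Rightarrow> real^'n"
  assumes P_sym: "transpose P = P" and S_sym: "transpose S = S" and lmi: "lmi b \<omega> F L S P"
    and "0 \<le> b" "b \<le> 1" "\<omega> > 0"
    and e_init: "e 1 = 0"
    and e_step: "\<And>k. k \<ge> 1 \<Longrightarrow> e (Suc k) = F *v e k - (L ** S) *v \<zeta> k + v k"
    and noise: "\<And>k. k \<ge> 1 \<Longrightarrow> (norm (v k))\<^sup>2 + (norm (\<zeta> k))\<^sup>2 \<le> \<omega>"
    and "k \<ge> 1"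
  shows "e k \<bullet> (P *v e k) \<le> 1"
  using \<open>k \<ge> 1\<close>
proof (induction k rule: nat_induct_at_least)
  case base
  then show ?case using e_init by simp
next
  case (Suc k)
  define c where "c = (1 - b) / \<omega>"
  have "c \<ge> 0" using \<open>b \<le> 1\<close> \<open>\<omega> > 0\<close> by (simp add: c_def)
  have "e (Suc k) \<bullet> (P *v e (Suc k)) \<le> b * (e k \<bullet> (P *v e k)) + c * (v k \<bullet> v k + \<zeta> k \<bullet> \<zeta> k)"
    using lmi_step_bound[OF P_sym S_sym lmi] e_step[OF Suc.hyps] by (simp add: c_def)
  also have "\<dots> \<le> b * 1 + c * \<omega>"
    using Suc.IH noise[OF Suc.hyps] \<open>0 \<le> b\<close> \<open>c \<ge> 0\<close>
    by (intro add_mono mult_left_mono) (auto simp: power2_norm_eq_inner)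
  also have "\<dots> = 1" using \<open>\<omega> > 0\<close> by (simp add: c_def)
  finally show ?case .
qed

theorem corollary3:
  fixes F :: "real^'n^'n" and L :: "real^'m^'n" and Sig S :: "real^'m^'m"
    and \<alpha> A ap vbar b \<epsilon> \<omega> :: real and P :: "real^'n^'n"
  assumes Sig_sym: "transpose Sig = Sig" and Sig_pd: "posdef Sig"
    and S_sym: "transpose S = S" and S_sqrt: "S ** S = Sig"
    and alpha_pos: "\<alpha> > 0" and A_pos: "0 < A" and A_le1: "A \<le> 1"
    and ap_pos: "0 < ap" and ap_lt: "ap < A" and vbar_pos: "vbar > 0"
    and b_pos: "0 < b" and b_lt1: "b < 1"
    and eps_def: "\<epsilon> = real CARD('m) / (A - ap) - \<alpha>"
    and omega_def: "\<omega> = \<alpha> + \<epsilon> + vbar"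
    and P_pd: "posdef P" and P_lmi: "lmi b \<omega> F L S P"
    and P_opt: "\<forall>P'. posdef P' \<and> lmi b \<omega> F L S P' \<longrightarrow> - ln (det P) \<le> - ln (det P')"
  shows "(\<forall>(e::nat \<Rightarrow> real^'n) (\<zeta>::nat \<Rightarrow> real^'m) (v::nat \<Rightarrow> real^'n).
            e 1 = 0
            \<and> (\<forall>k\<ge>1. e (Suc k) = F *v e k - (L ** S) *v \<zeta> k + v k)
            \<and> (\<forall>k\<ge>1. (norm (\<zeta> k))\<^sup>2 \<le> \<alpha> + \<epsilon>)
            \<and> (\<forall>k\<ge>1. (norm (v k))\<^sup>2 \<le> vbar)
            \<longrightarrow> (\<forall>k\<ge>1. e k \<bullet> (P *v e k) \<le> 1))
       \<and> (\<forall>P'. posdef P' \<and> lmi b \<omega> F L S P' \<longrightarrow>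
            emeasure lborel {e::real^'n. e \<bullet> (P *v e) \<le> 1}
              \<le> emeasure lborel {e::real^'n. e \<bullet> (P' *v e) \<le> 1})"
proof (intro conjI allI impI)
  fix e :: "nat \<Rightarrow> real^'n" and \<zeta> :: "nat \<Rightarrow> real^'m" and v :: "nat \<Rightarrow> real^'n" and k :: nat
  assume traj: "e 1 = 0 \<and> (\<forall>k\<ge>1. e (Suc k) = F *v e k - (L ** S) *v \<zeta> k + v k)
            \<and> (\<forall>k\<ge>1. (norm (\<zeta> k))\<^sup>2 \<le> \<alpha> + \<epsilon>) \<and> (\<forall>k\<ge>1. (norm (v k))\<^sup>2 \<le> vbar)"
    and "k \<ge> 1"
  have "real CARD('m) / (A - ap) \<ge> 0" using ap_lt by simp
  then have "\<omega> > 0" using omega_def eps_def vbar_pos by simp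
  moreover have "(norm (v j))\<^sup>2 + (norm (\<zeta> j))\<^sup>2 \<le> \<omega>" if "j \<ge> 1" for j
    using traj that omega_def by fastforce
  ultimately show "e k \<bullet> (P *v e k) \<le> 1"
    using lmi_ellipsoid_invariant[OF _ S_sym P_lmi, of e] P_pd traj \<open>k \<ge> 1\<close> b_pos b_lt1
    by (auto simp: posdef_def)
next
  fix P' :: "real^'n^'n"
  assume P': "posdef P' \<and> lmi b \<omega> F L S P'"
  then have "ln (det P') \<le> ln (det P)" using P_opt by force
  moreover have "det P > 0" "det P' > 0"
    using P' P_pd posdef_det_pos by blast+
  ultimately have "det P' \<le> det P" by simp
  then show "emeasure lborel {e::real^'n. e \<bullet> (P *v e) \<le> 1}
              \<le> emeasure lborel {e::real^'n. e \<bullet> (P' *v e) \<le> 1}"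
    using emeasure_ellipsoid_le_if_det_ge P_pd P' by blast
qed

end
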